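(* Let $r_1,\dots,r_n$ be pairwise distinct integers, $v_1,\dots,v_n\in\mathbb{N}\cup\{\infty\}$, and $d=\gcd(r_1,\dots,r_n)$. Let $f\in F\langle X|\mathbb{Z}\rangle$ be a multilinear polynomial. Then $f\in T_{\mathbb{Z}}(E_{(r_1/d,\dots,r_n/d)}^{(v_1,\dots,v_n)})$ if and only if $\Phi_d(f)\in T_{d\mathbb{Z}}(E_{(r_1,\dots,r_n)}^{(v_1,\dots,v_n)})$, where $E_{(r_1,\dots,r_n)}^{(v_1,\dots,v_n)}$ is regarded as a $d\mathbb{Z}$-graded algebra.
   Context: $F$ is a field of characteristic zero; $E$ is the Grassmann algebra of an infinite-dimensional $F$-vector space with basis $e_1,e_2,\dots$. For pairwise distinct integers $s_j$ and $v_j\in\mathbb{N}\cup\{\infty\}$, $E_{(s_1,\dots,s_n)}^{(v_1,\dots,v_n)}$ is the $\mathbb{Z}$-grading obtained by splitting $\{e_i\}$ into $n$ disjoint sets of cardinalities $v_1,\dots,v_n$, giving elements of the $j$-th set degree $s_j$ and monomials the sum of degrees; when all $s_j\in d\mathbb{Z}$ its components are indexed by $d\mathbb{Z}$. For a group $G$, $F\langle X|G\rangle$ is the free associative algebra on variables $x_i^g$ of degree $g$, and $T_G(A)$ is the set of graded identities of a $G$-graded algebra $A$. $\Phi_d:F\langle X|\mathbb{Z}\rangle\to F\langle X|d\mathbb{Z}\rangle$ is the algebra isomorphism $x_i^n\mapsto x_i^{dn}$. *)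

theory Defs
  imports Main "HOL-Library.Extended_Nat"
begin

text \<open>An element of E is a function from finite sets of generator indices (the
monomial e_S = e_{s1} ... e_{sk}, s1 < ... < sk) to coefficients, with finite support
consisting of finite sets.\<close>

definition grass_elem :: "(nat set \<Rightarrow> 'a::field) \<Rightarrow> bool" where
  "grass_elem x \<longleftrightarrow> finite {S. x S \<noteq> 0} \<and> (\<forall>S. x S \<noteq> 0 \<longrightarrow> finite S)"

text \<open>Sign of e_S e_T = sgn S T e_{S \<union> T} for disjoint S, T.\<close>
definition grass_sign :: "nat set \<Rightarrow> nat set \<Rightarrow> 'a::field" where
  "grass_sign S T = (-1) ^ card {(i, j). i \<in> S \<and> j \<in> T \<and> j < i}"

definition grass_mult :: "(nat set \<Rightarrow> 'a::field) \<Rightarrow> (nat set \<Rightarrow> 'a) \<Rightarrow> (nat set \<Rightarrow> 'a)" where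
  "grass_mult x y = (\<lambda>U. if finite U
      then (\<Sum>S\<in>Pow U. grass_sign S (U - S) * x S * y (U - S)) else 0)"

definition grass_one :: "nat set \<Rightarrow> 'a::field" where
  "grass_one = (\<lambda>S. if S = {} then 1 else 0)"

definition grass_prod :: "(nat set \<Rightarrow> 'a::field) list \<Rightarrow> (nat set \<Rightarrow> 'a)" where
  "grass_prod xs = foldr grass_mult xs grass_one"

text \<open>A degree assignment deg on the generators makes E a Z-graded algebra; the
component of degree g consists of the linear combinations of monomials e_S with
sum of degrees of the generators in S equal to g.\<close>

definition grass_comp :: "(nat \<Rightarrow> int) \<Rightarrow> int \<Rightarrow> (nat set \<Rightarrow> 'a::field) set" where
  "grass_comp deg g = {x. grass_elem x \<and> (\<forall>S. x S \<noteq> 0 \<longrightarrow> (\<Sum>i\<in>S. deg i) = g)}"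

definition ecard :: "'b set \<Rightarrow> enat" where
  "ecard A = (if finite A then enat (card A) else \<infinity>)"

text \<open>deg realises the grading E_{(s_1,...,s_n)}^{(v_1,...,v_n)} (indices 0..n-1):
the generators are split into the n disjoint sets {i. deg i = s j}, of cardinality v j,
elements of the j-th set having degree s j.\<close>
definition is_split_grading :: "nat \<Rightarrow> (nat \<Rightarrow> int) \<Rightarrow> (nat \<Rightarrow> enat) \<Rightarrow> (nat \<Rightarrow> int) \<Rightarrow> bool" where
  "is_split_grading n s v deg \<longleftrightarrow>
     (\<forall>i. \<exists>j<n. deg i = s j) \<and> (\<forall>j<n. ecard {i. deg i = s j} = v j)"

text \<open>Variables x_i^g are pairs (i, g); a polynomial is a finitely supported function
from words (lists of variables) to coefficients.\<close>

type_synonym 'a gpoly = "(nat \<times> int) list \<Rightarrow> 'a"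

definition is_gpoly :: "'a::field gpoly \<Rightarrow> bool" where
  "is_gpoly f \<longleftrightarrow> finite {w. f w \<noteq> 0}"

definition multilinear :: "'a::field gpoly \<Rightarrow> bool" where
  "multilinear f \<longleftrightarrow> (\<exists>V. finite V \<and> (\<forall>w. f w \<noteq> 0 \<longrightarrow> distinct w \<and> set w = V))"

definition gpoly_eval :: "'a::field gpoly \<Rightarrow> (nat \<times> int \<Rightarrow> (nat set \<Rightarrow> 'a)) \<Rightarrow> (nat set \<Rightarrow> 'a)" where
  "gpoly_eval f \<phi> = (\<lambda>U. \<Sum>w\<in>{w. f w \<noteq> 0}. f w * grass_prod (map \<phi> w) U)"

definition graded_identity :: "(nat \<Rightarrow> int) \<Rightarrow> 'a::field gpoly \<Rightarrow> bool" where
  "graded_identity deg f \<longleftrightarrow>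
     (\<forall>\<phi>. (\<forall>i g. \<phi> (i, g) \<in> grass_comp deg g) \<longrightarrow> gpoly_eval f \<phi> = (\<lambda>_. 0))"

text \<open>Phi_d : F<X|Z> \<rightarrow> F<X|dZ>, x_i^m \<mapsto> x_i^{dm} (for d \<noteq> 0).\<close>
definition Phi :: "int \<Rightarrow> 'a::field gpoly \<Rightarrow> 'a gpoly" where
  "Phi d f = (\<lambda>w. if (\<forall>x\<in>set w. d dvd snd x)
                    then f (map (\<lambda>(i, g). (i, g div d)) w) else 0)"

end

theory Submission
  imports Defs "HOL-Library.Equipollence"
begin

text \<open>Multiplying every generator degree by d turns the grading by the r_j/d into one by the
  r_j whose component of degree d m is the component of degree m of the original grading;
  \<open>Phi d\<close> accounts exactly for this change of degrees, and variables whose degree is not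
  divisible by d can only be substituted by 0. The rescaled grading and the grading by the r_j
  split the generators into sets of the same sizes v_j, so they differ by a permutation \<sigma>
  of the generators. Finally e_i \<mapsto> e_(\<sigma> i) extends to an algebra automorphism of E
  matching the homogeneous components of the two gradings, and graded identities are invariant
  under such automorphisms.\<close>

lemma power_card_pairs_eq_prod:
  assumes "finite S" "finite T"
  shows "(-1::'a::comm_ring_1) ^ card {(i, j). i \<in> S \<and> j \<in> T \<and> P i j}
       = (\<Prod>i\<in>S. \<Prod>j\<in>T. if P i j then -1 else 1)"
proof -
  have "(\<Prod>i\<in>S. \<Prod>j\<in>T. if P i j then -1 else 1)
      = (\<Prod>p\<in>S \<times> T. if P (fst p) (snd p) then -1 else (1::'a))"
    by (simp add: prod.cartesian_product split_def)
  also have "\<dots> = (-1) ^ card ((S \<times> T) \<inter> {p. P (fst p) (snd p)})"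
    using assms by (simp add: prod.If_cases)
  also have "(S \<times> T) \<inter> {p. P (fst p) (snd p)} = {(i, j). i \<in> S \<and> j \<in> T \<and> P i j}"
    by auto
  finally show ?thesis ..
qed

lemma grass_sign_eq_prod:
  "finite S \<Longrightarrow> finite T \<Longrightarrow> grass_sign S T = (\<Prod>i\<in>S. \<Prod>j\<in>T. if j < i then -1 else 1)"
  unfolding grass_sign_def by (rule power_card_pairs_eq_prod)

lemma grass_sign_image:
  assumes "inj \<sigma>" "finite S" "finite T"
  shows "grass_sign (\<sigma> ` S) (\<sigma> ` T) = (\<Prod>i\<in>S. \<Prod>j\<in>T. if \<sigma> j < \<sigma> i then -1 else 1)"
  using assms by (simp add: grass_sign_eq_prod prod.reindex inj_on_subset[OF assms(1)])

definition perm_sign :: "(nat \<Rightarrow> nat) \<Rightarrow> nat set \<Rightarrow> 'a::field" where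
  "perm_sign \<sigma> W = (-1) ^ card {(i, j). i \<in> W \<and> j \<in> W \<and> i < j \<and> \<sigma> j < \<sigma> i}"

lemma perm_sign_eq_prod:
  "finite W \<Longrightarrow> perm_sign \<sigma> W = (\<Prod>i\<in>W. \<Prod>j\<in>W. if i < j \<and> \<sigma> j < \<sigma> i then -1 else 1)"
  unfolding perm_sign_def by (rule power_card_pairs_eq_prod)

lemma perm_sign_empty [simp]: "perm_sign \<sigma> {} = 1"
  by (simp add: perm_sign_def)

lemma perm_sign_nonzero [simp]: "perm_sign \<sigma> W \<noteq> 0"
  by (simp add: perm_sign_def)

lemma perm_sign_Un:
  assumes "inj \<sigma>" "finite S" "finite T" "S \<inter> T = {}"
  shows "perm_sign \<sigma> (S \<union> T) * grass_sign S T
       = grass_sign (\<sigma> ` S) (\<sigma> ` T) * perm_sign \<sigma> S * (perm_sign \<sigma> T :: 'a::field)"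
proof -
  define g :: "nat \<Rightarrow> nat \<Rightarrow> 'a" where "g i j = (if i < j \<and> \<sigma> j < \<sigma> i then -1 else 1)" for i j
  have swap: "(\<Prod>i\<in>T. \<Prod>j\<in>S. g i j) = (\<Prod>i\<in>S. \<Prod>j\<in>T. g j i)"
    by (rule prod.swap)
  have "perm_sign \<sigma> (S \<union> T)
      = perm_sign \<sigma> S * perm_sign \<sigma> T * (\<Prod>i\<in>S. \<Prod>j\<in>T. g i j * g j i)"
    using assms swap
    by (simp add: perm_sign_eq_prod prod.union_disjoint prod.distrib g_def[symmetric] ac_simps)
  moreover have "g i j * g j i * (if j < i then -1 else 1) = (if \<sigma> j < \<sigma> i then -1 else 1)"
    if "i \<in> S" "j \<in> T" for i j
  proof -
    have "i \<noteq> j" "\<sigma> i \<noteq> \<sigma> j"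
      using that assms(1,4) by (auto dest: injD)
    then show ?thesis
      by (cases "i < j"; cases "\<sigma> i < \<sigma> j") (auto simp: g_def)
  qed
  ultimately show ?thesis
    using assms
    by (simp only: grass_sign_image) (simp add: grass_sign_eq_prod prod.distrib [symmetric] ac_simps)
qed

text \<open>For a bijection \<sigma>, the automorphism of E with e_i \<mapsto> e_(\<sigma> i); it sends e_S to
  perm_sign \<sigma> S \<cdot> e_(\<sigma> ` S).\<close>

definition grass_perm :: "(nat \<Rightarrow> nat) \<Rightarrow> (nat set \<Rightarrow> 'a::field) \<Rightarrow> (nat set \<Rightarrow> 'a)" where
  "grass_perm \<sigma> x = (\<lambda>U. perm_sign \<sigma> (\<sigma> -` U) * x (\<sigma> -` U))"

lemma grass_perm_mult_term:
  assumes "inj \<sigma>" "finite V" "S \<subseteq> V"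
  shows "grass_sign (\<sigma> ` S) (\<sigma> ` (V - S)) * grass_perm \<sigma> x (\<sigma> ` S) * grass_perm \<sigma> y (\<sigma> ` (V - S))
       = perm_sign \<sigma> V * (grass_sign S (V - S) * x S * y (V - S))"
proof -
  have "finite S" "finite (V - S)" "S \<union> (V - S) = V"
    using assms finite_subset by auto
  then have sign: "perm_sign \<sigma> V * grass_sign S (V - S)
      = grass_sign (\<sigma> ` S) (\<sigma> ` (V - S)) * perm_sign \<sigma> S * perm_sign \<sigma> (V - S)"
    using perm_sign_Un [OF assms(1), of S "V - S"] by simp
  have "grass_sign (\<sigma> ` S) (\<sigma> ` (V - S)) * grass_perm \<sigma> x (\<sigma> ` S) * grass_perm \<sigma> y (\<sigma> ` (V - S))
      = grass_sign (\<sigma> ` S) (\<sigma> ` (V - S)) * perm_sign \<sigma> S * perm_sign \<sigma> (V - S) * x S * y (V - S)"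
    using assms(1) by (simp add: grass_perm_def inj_vimage_image_eq ac_simps)
  also have "\<dots> = perm_sign \<sigma> V * grass_sign S (V - S) * x S * y (V - S)"
    by (simp only: sign)
  finally show ?thesis
    by (simp add: ac_simps)
qed

lemma grass_perm_mult:
  assumes "bij \<sigma>"
  shows "grass_perm \<sigma> (grass_mult x y) = grass_mult (grass_perm \<sigma> x) (grass_perm \<sigma> y)"
proof
  fix U
  define V where "V = \<sigma> -` U"
  have inj: "inj \<sigma>"
    using assms by (rule bij_is_inj)
  have U: "U = \<sigma> ` V"
    using assms by (simp add: V_def bij_is_surj surj_image_vimage_eq)
  show "grass_perm \<sigma> (grass_mult x y) U = grass_mult (grass_perm \<sigma> x) (grass_perm \<sigma> y) U"
  proof (cases "finite V")
    case False
    then have "infinite U"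
      using U inj by (auto dest: finite_imageD intro: inj_on_subset)
    with False show ?thesis
      by (simp add: grass_perm_def grass_mult_def V_def[symmetric])
  next
    case True
    have "Pow U = image \<sigma> ` Pow V"
      using image_Pow_surj [OF U [symmetric]] by simp
    moreover have "inj_on (image \<sigma>) (Pow V)"
      using inj inj_on_image_Pow inj_on_subset by blast
    moreover have "finite U"
      using True by (simp add: U)
    ultimately have "grass_mult (grass_perm \<sigma> x) (grass_perm \<sigma> y) U
        = (\<Sum>S\<in>Pow V. grass_sign (\<sigma> ` S) (U - \<sigma> ` S)
             * grass_perm \<sigma> x (\<sigma> ` S) * grass_perm \<sigma> y (U - \<sigma> ` S))"
      by (simp add: grass_mult_def sum.reindex)
    also have "\<dots> = (\<Sum>S\<in>Pow V. perm_sign \<sigma> V * (grass_sign S (V - S) * x S * y (V - S)))"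
      using True U inj
      by (intro sum.cong refl) (simp add: image_set_diff [OF inj, symmetric] grass_perm_mult_term)
    also have "\<dots> = grass_perm \<sigma> (grass_mult x y) U"
      using True by (simp add: grass_perm_def grass_mult_def V_def[symmetric] sum_distrib_left)
    finally show ?thesis ..
  qed
qed

lemma grass_perm_one:
  assumes "bij \<sigma>"
  shows "grass_perm \<sigma> grass_one = grass_one"
proof
  fix U
  have "\<sigma> -` U = {} \<longleftrightarrow> U = {}"
    using assms by (metis bij_is_surj image_empty surj_image_vimage_eq vimage_empty)
  then show "grass_perm \<sigma> grass_one U = grass_one U"
    by (simp add: grass_perm_def grass_one_def)
qed

lemma grass_perm_prod:
  assumes "bij \<sigma>"
  shows "grass_perm \<sigma> (grass_prod xs) = grass_prod (map (grass_perm \<sigma>) xs)"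
  by (induction xs) (simp_all add: grass_prod_def grass_perm_one grass_perm_mult assms)

lemma grass_perm_gpoly_eval:
  assumes "bij \<sigma>"
  shows "grass_perm \<sigma> (gpoly_eval f \<phi>) = gpoly_eval f (grass_perm \<sigma> \<circ> \<phi>)"
proof
  fix U
  have "grass_perm \<sigma> (gpoly_eval f \<phi>) U
      = (\<Sum>w | f w \<noteq> 0. f w * grass_perm \<sigma> (grass_prod (map \<phi> w)) U)"
    by (simp add: grass_perm_def gpoly_eval_def sum_distrib_left algebra_simps)
  then show "grass_perm \<sigma> (gpoly_eval f \<phi>) U = gpoly_eval f (grass_perm \<sigma> \<circ> \<phi>) U"
    by (simp add: gpoly_eval_def grass_perm_prod assms)
qed

lemma grass_perm_eq_zero:
  assumes "inj \<sigma>" "grass_perm \<sigma> x = (\<lambda>_. 0)"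
  shows "x = (\<lambda>_. 0)"
proof
  fix V
  have "perm_sign \<sigma> V * x V = 0"
    using fun_cong [OF assms(2), of "\<sigma> ` V"] assms(1)
    by (simp add: grass_perm_def inj_vimage_image_eq)
  then show "x V = 0"
    by simp
qed

lemma grass_perm_grass_comp:
  assumes "bij \<sigma>" "x \<in> grass_comp (deg \<circ> \<sigma>) g"
  shows "grass_perm \<sigma> x \<in> grass_comp deg g"
proof -
  have inj: "inj \<sigma>" and image: "\<And>U. \<sigma> ` (\<sigma> -` U) = U"
    using assms(1) by (simp_all add: bij_is_inj bij_is_surj surj_image_vimage_eq)
  have x: "finite {S. x S \<noteq> 0}" "\<And>S. x S \<noteq> 0 \<Longrightarrow> finite S \<and> (\<Sum>i\<in>S. deg (\<sigma> i)) = g"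
    using assms(2) by (auto simp: grass_comp_def grass_elem_def)
  have preimage: "\<exists>V. x V \<noteq> 0 \<and> U = \<sigma> ` V" if "grass_perm \<sigma> x U \<noteq> 0" for U
  proof (intro exI conjI)
    show "x (\<sigma> -` U) \<noteq> 0"
      using that by (simp add: grass_perm_def)
    show "U = \<sigma> ` (\<sigma> -` U)"
      by (rule image [symmetric])
  qed
  then have "{U. grass_perm \<sigma> x U \<noteq> 0} \<subseteq> image \<sigma> ` {S. x S \<noteq> 0}"
    by blast
  then have "finite {U. grass_perm \<sigma> x U \<noteq> 0}"
    using x(1) finite_subset by blast
  moreover have "finite U \<and> (\<Sum>i\<in>U. deg i) = g" if nonzero: "grass_perm \<sigma> x U \<noteq> 0" for U
  proof -
    obtain V where "x V \<noteq> 0" "U = \<sigma> ` V"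
      using preimage [OF nonzero] by blast
    then show ?thesis
      using x(2) inj by (simp add: sum.reindex inj_on_subset)
  qed
  ultimately show ?thesis
    by (auto simp: grass_comp_def grass_elem_def)
qed

lemma graded_identity_perm:
  assumes "bij \<sigma>" "graded_identity deg f"
  shows "graded_identity (deg \<circ> \<sigma>) f"
  unfolding graded_identity_def
proof (intro allI impI)
  fix \<phi> :: "nat \<times> int \<Rightarrow> nat set \<Rightarrow> 'a"
  assume "\<forall>i g. \<phi> (i, g) \<in> grass_comp (deg \<circ> \<sigma>) g"
  then have "\<forall>i g. (grass_perm \<sigma> \<circ> \<phi>) (i, g) \<in> grass_comp deg g"
    by (simp add: grass_perm_grass_comp assms(1))
  then have "grass_perm \<sigma> (gpoly_eval f \<phi>) = (\<lambda>_. 0)"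
    using assms by (simp add: graded_identity_def grass_perm_gpoly_eval)
  then show "gpoly_eval f \<phi> = (\<lambda>_. 0)"
    using assms(1) bij_is_inj grass_perm_eq_zero by blast
qed

lemma graded_identity_perm_iff:
  assumes "bij \<sigma>"
  shows "graded_identity (deg \<circ> \<sigma>) f \<longleftrightarrow> graded_identity deg f"
proof
  assume "graded_identity (deg \<circ> \<sigma>) f"
  then have "graded_identity (deg \<circ> \<sigma> \<circ> inv \<sigma>) f"
    using assms bij_imp_bij_inv graded_identity_perm by blast
  moreover have "deg \<circ> \<sigma> \<circ> inv \<sigma> = deg"
    using surj_iff [THEN iffD1, OF bij_is_surj [OF assms]] by (simp add: comp_assoc)
  ultimately show "graded_identity deg f"
    by simp
qed (use assms graded_identity_perm in blast)

lemma grass_comp_scale: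
  assumes "(d::int) \<noteq> 0"
  shows "grass_comp (\<lambda>i. d * deg i) (d * g) = grass_comp deg g"
  using assms by (simp add: grass_comp_def flip: sum_distrib_left)

lemma zero_in_grass_comp: "(\<lambda>_. 0) \<in> grass_comp deg g"
  by (simp add: grass_comp_def grass_elem_def)

lemma gpoly_eval_Phi:
  assumes "(d::int) \<noteq> 0"
  shows "gpoly_eval (Phi d f) \<phi> = gpoly_eval f (\<phi> \<circ> (\<lambda>(i, h). (i, d * h)))"
proof -
  define m where "m = (\<lambda>(i::nat, h::int). (i, d * h))"
  define m' where "m' = (\<lambda>(i::nat, g::int). (i, g div d))"
  have m'_m: "m' (m x) = x" for x
    using assms by (cases x) (simp add: m_def m'_def)
  have m_m': "m (m' x) = x" if "d dvd snd x" for x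
    using that by (cases x) (auto simp: m_def m'_def)
  have inj: "inj (map m)"
    by (metis m'_m injI list.inj_map)
  have Phi_map: "Phi d f (map m w) = f w" for w
  proof -
    have "\<forall>x\<in>set (map m w). d dvd snd x"
      by (auto simp: m_def)
    moreover have "map m' (map m w) = w"
      by (simp add: m'_m map_idI)
    ultimately show ?thesis
      by (simp add: Phi_def m'_def)
  qed
  have support: "{w. Phi d f w \<noteq> 0} = map m ` {w. f w \<noteq> 0}"
  proof (intro equalityI subsetI)
    fix w assume "w \<in> {w. Phi d f w \<noteq> 0}"
    then have "\<forall>x\<in>set w. d dvd snd x" "f (map m' w) \<noteq> 0"
      by (auto simp: Phi_def m'_def split: if_splits)
    moreover from this(1) have "w = map m (map m' w)"
      by (induction w) (auto simp: m_m')
    ultimately show "w \<in> map m ` {w. f w \<noteq> 0}"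
      by blast
  qed (auto simp: Phi_map)
  show ?thesis
    unfolding gpoly_eval_def support sum.reindex [OF inj_on_subset [OF inj subset_UNIV]]
    by (simp add: Phi_map flip: m_def)
qed

lemma graded_identity_Phi_iff:
  assumes d: "(d::int) \<noteq> 0"
  shows "graded_identity (\<lambda>i. d * deg i) (Phi d f) \<longleftrightarrow> graded_identity deg f"
proof
  assume unscaled: "graded_identity deg f"
  show "graded_identity (\<lambda>i. d * deg i) (Phi d f)"
    unfolding graded_identity_def
  proof (intro allI impI)
    fix \<phi> :: "nat \<times> int \<Rightarrow> nat set \<Rightarrow> 'a"
    assume "\<forall>i g. \<phi> (i, g) \<in> grass_comp (\<lambda>i. d * deg i) g"
    then have "\<phi> (i, d * g) \<in> grass_comp deg g" for i g
      by (metis grass_comp_scale [OF d])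
    then show "gpoly_eval (Phi d f) \<phi> = (\<lambda>_. 0)"
      using unscaled by (simp add: graded_identity_def gpoly_eval_Phi d)
  qed
next
  assume scaled: "graded_identity (\<lambda>i. d * deg i) (Phi d f)"
  show "graded_identity deg f"
    unfolding graded_identity_def
  proof (intro allI impI)
    fix \<psi> :: "nat \<times> int \<Rightarrow> nat set \<Rightarrow> 'a"
    assume \<psi>: "\<forall>i g. \<psi> (i, g) \<in> grass_comp deg g"
    define \<phi> where "\<phi> = (\<lambda>(i, g). if d dvd g then \<psi> (i, g div d) else (\<lambda>_. 0))"
    have "\<phi> (i, g) \<in> grass_comp (\<lambda>i. d * deg i) g" for i g
      using \<psi> d by (auto simp: \<phi>_def grass_comp_scale zero_in_grass_comp)
    then have "gpoly_eval (Phi d f) \<phi> = (\<lambda>_. 0)"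
      using scaled by (simp add: graded_identity_def)
    moreover have "\<phi> \<circ> (\<lambda>(i, h). (i, d * h)) = \<psi>"
      using d by (auto simp: \<phi>_def)
    ultimately show "gpoly_eval f \<psi> = (\<lambda>_. 0)"
      by (simp add: gpoly_eval_Phi d)
  qed
qed

lemma ecard_eq_imp_eqpoll:
  assumes "countable A" "countable B" "ecard A = ecard B"
  shows "A \<approx> B"
proof (cases "finite A")
  case True
  then show ?thesis
    using assms(3) by (auto simp: ecard_def eqpoll_iff_card split: if_splits)
next
  case False
  then have "infinite B"
    using assms(3) by (auto simp: ecard_def split: if_splits)
  obtain e where "bij_betw e A (UNIV :: nat set)"
    using assms(1) False by (rule countableE_infinite)
  moreover obtain e' where "bij_betw e' B (UNIV :: nat set)"
    using assms(2) \<open>infinite B\<close> by (rule countableE_infinite)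
  ultimately show ?thesis
    by (meson eqpoll_def eqpoll_sym eqpoll_trans)
qed

lemma eqpoll_fibres_imp_bij:
  assumes "\<And>c. {x. a x = c} \<approx> {y. b y = c}"
  shows "\<exists>\<sigma>. bij \<sigma> \<and> b \<circ> \<sigma> = a"
proof -
  obtain h where h: "\<And>c. bij_betw (h c) {x. a x = c} {y. b y = c}"
    using assms unfolding eqpoll_def by metis
  define \<sigma> where "\<sigma> x = h (a x) x" for x
  have b_\<sigma>: "b (\<sigma> x) = a x" for x
    using bij_betwE [OF h [of "a x"]] by (simp add: \<sigma>_def)
  have "inj \<sigma>"
  proof (rule injI)
    fix x y assume "\<sigma> x = \<sigma> y"
    moreover from this have "a x = a y"
      by (metis b_\<sigma>)
    ultimately show "x = y"
      using bij_betw_imp_inj_on [OF h [of "a x"]] by (simp add: \<sigma>_def inj_on_def)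
  qed
  moreover have "y \<in> range \<sigma>" for y
  proof -
    obtain x where "a x = b y" "h (b y) x = y"
      using bij_betw_imp_surj_on [OF h [of "b y"]] by force
    then have "\<sigma> x = y"
      by (simp add: \<sigma>_def)
    then show ?thesis
      by blast
  qed
  ultimately have "bij \<sigma>"
    by (auto simp: bij_def)
  with b_\<sigma> show ?thesis
    by (intro exI [of _ \<sigma>]) (simp add: fun_eq_iff)
qed

lemma is_split_grading_relabel:
  assumes "is_split_grading n s v deg" "inj h" "\<forall>j<n. t j = h (s j)"
  shows "is_split_grading n t v (\<lambda>i. h (deg i))"
proof -
  have "{i. h (deg i) = t j} = {i. deg i = s j}" if "j < n" for j
    using assms(2,3) that by (simp add: inj_eq)
  then show ?thesis
    using assms(1,3) unfolding is_split_grading_def by metis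
qed

lemma split_gradings_differ_by_perm:
  assumes "is_split_grading n s v deg1" "is_split_grading n s v deg2"
  shows "\<exists>\<sigma>. bij \<sigma> \<and> deg2 \<circ> \<sigma> = deg1"
proof (rule eqpoll_fibres_imp_bij)
  fix c
  show "{i. deg1 i = c} \<approx> {i. deg2 i = c}"
  proof (cases "\<exists>j<n. c = s j")
    case True
    then show ?thesis
      using assms by (auto simp: is_split_grading_def intro: ecard_eq_imp_eqpoll)
  next
    case False
    then have "{i. deg1 i = c} = {}" "{i. deg2 i = c} = {}"
      using assms by (auto simp: is_split_grading_def)
    then show ?thesis
      by simp
  qed
qed

theorem lemma5p4:
  fixes n :: nat and r :: "nat \<Rightarrow> int" and v :: "nat \<Rightarrow> enat"
    and f :: "'a::field_char_0 gpoly"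
    and \<alpha> \<beta> :: "nat \<Rightarrow> int"
  defines "d \<equiv> Gcd (r ` {..<n})"
  assumes distinct: "inj_on r {..<n}"
    and d_nz: "d \<noteq> 0"
    and f_poly: "is_gpoly f"
    and f_ml: "multilinear f"
    and \<alpha>: "is_split_grading n (\<lambda>j. r j div d) v \<alpha>"
    and \<beta>: "is_split_grading n r v \<beta>"
  shows "graded_identity \<alpha> f \<longleftrightarrow> graded_identity \<beta> (Phi d f)"
proof -
  have "\<forall>j<n. r j = d * (r j div d)"
    by (simp add: d_def Gcd_dvd)
  then have "is_split_grading n r v (\<lambda>i. d * \<alpha> i)"
    using is_split_grading_relabel [OF \<alpha>] d_nz by simp
  then obtain \<sigma> where "bij \<sigma>" "\<beta> \<circ> \<sigma> = (\<lambda>i. d * \<alpha> i)"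
    using split_gradings_differ_by_perm \<beta> by blast
  have "graded_identity \<alpha> f \<longleftrightarrow> graded_identity (\<lambda>i. d * \<alpha> i) (Phi d f)"
    using graded_identity_Phi_iff [OF d_nz] by blast
  also have "\<dots> \<longleftrightarrow> graded_identity \<beta> (Phi d f)"
    using graded_identity_perm_iff [OF \<open>bij \<sigma>\<close>] \<open>\<beta> \<circ> \<sigma> = _\<close> by metis
  finally show ?thesis .
qed

end
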